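(* Assume $f$ satisfies Hypothesis 2 (see context), and let $\xi_\eta$ be as in the context. Then for each $\eta\in(0,1]$ and all $s\in(0,+\infty)$: \[ |\xi_\eta(s)|\le\kappa s^{1-\alpha},\qquad |\xi_\eta'(s)|\le(1+\alpha)\kappa s^{-\alpha}+2\eta\alpha\kappa^2s^{1-2\alpha}, \] \[ |\xi_\eta''(s)f''(s)s^2|\le(\kappa+1)s^{-1}+2\eta\kappa(2+\alpha+\kappa)s^{-\alpha}+4\alpha\eta^2\kappa^2s^{1-2\alpha}. \]
   Context: Hypothesis 2 on $f\colon(0,\infty)\to\mathbb{R}$: (I1) $f\in C^{4,\beta}_{loc}(0,\infty)$ for some $\beta\in(0,1]$, $f''>0$; (I2) $\frac{1}{\alpha\kappa}s^\alpha\le s^2f''(s)$ for $s>0$, with $\alpha\in(0,1)$, $\kappa>0$; (I3) $|sf'''(s)/f''(s)|\le\kappa$ for $s>0$; (I4) there is $\mathcal{K}_{\inf}>0$ with $\int_\Omega f(\mu)\,dx>-\mathcal{K}_{\inf}$ for all $\mu\in\mathscr{P}^{ac}(\Omega)$, $\Omega=(0,L)$. For $\eta\in(0,1]$, $\xi_\eta(s)=-s\exp\!\big(\int_0^s\frac{2\eta}{y^2f''(y)}dy\big)\int_s^\infty\exp\!\big(-\int_0^y\frac{2\eta}{z^2f''(z)}dz\big)\frac{dy}{y^3f''(y)}$. *)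

theory Defs
  imports "HOL-Analysis.Analysis"
begin

definition C4beta_loc :: "real \<Rightarrow> (real \<Rightarrow> real) \<Rightarrow> bool" where
  "C4beta_loc \<beta> f \<longleftrightarrow>
     (\<forall>k<4. \<forall>x>0. ((deriv ^^ k) f) differentiable (at x)) \<and>
     (\<forall>a b. 0 < a \<longrightarrow> a \<le> b \<longrightarrow>
        (\<exists>C. \<forall>x\<in>{a..b}. \<forall>y\<in>{a..b}.
            \<bar>(deriv ^^ 4) f x - (deriv ^^ 4) f y\<bar> \<le> C * \<bar>x - y\<bar> powr \<beta>))"

text \<open>Hypothesis 2 on f, with parameters beta, alpha, kappa, the interval length L
  (Omega = (0,L)) and the constant K_inf. Elements of P^ac(Omega) are represented by their
  Lebesgue densities rho on (0,L).\<close>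
definition hypothesis2 ::
  "(real \<Rightarrow> real) \<Rightarrow> real \<Rightarrow> real \<Rightarrow> real \<Rightarrow> real \<Rightarrow> real \<Rightarrow> bool" where
  "hypothesis2 f \<beta> \<alpha> \<kappa> L K \<longleftrightarrow>
     0 < \<beta> \<and> \<beta> \<le> 1 \<and> 0 < \<alpha> \<and> \<alpha> < 1 \<and> 0 < \<kappa> \<and> 0 < L \<and>
     C4beta_loc \<beta> f \<and>
     (\<forall>s>0. deriv (deriv f) s > 0) \<and>
     (\<forall>s>0. s powr \<alpha> / (\<alpha> * \<kappa>) \<le> s\<^sup>2 * deriv (deriv f) s) \<and>
     (\<forall>s>0. \<bar>s * deriv (deriv (deriv f)) s / deriv (deriv f) s\<bar> \<le> \<kappa>) \<and>
     0 < K \<and>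
     (\<forall>\<rho>::real \<Rightarrow> real. \<rho> \<in> borel_measurable lborel \<longrightarrow>
        (\<forall>x\<in>{0<..<L}. 0 < \<rho> x) \<longrightarrow>
        set_integrable lborel {0<..<L} \<rho> \<longrightarrow>
        (LBINT x:{0<..<L}. \<rho> x) = 1 \<longrightarrow>
        (LBINT x:{0<..<L}. f (\<rho> x)) > - K)"

definition Gfun :: "(real \<Rightarrow> real) \<Rightarrow> real \<Rightarrow> real \<Rightarrow> real" where
  "Gfun f \<eta> s = (LBINT y:{0<..s}. 2 * \<eta> / (y\<^sup>2 * deriv (deriv f) y))"

definition xi :: "(real \<Rightarrow> real) \<Rightarrow> real \<Rightarrow> real \<Rightarrow> real" where
  "xi f \<eta> s = - s * exp (Gfun f \<eta> s) *
     (LBINT y:{s<..}. exp (- Gfun f \<eta> y) / (y ^ 3 * deriv (deriv f) y))"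

end

theory Submission
  imports Defs
begin

text \<open>
  Write \<open>w = 1 / (s\<^sup>2 f'')\<close>, so that \<open>G = Gfun f \<eta>\<close> has \<open>G' = 2\<eta>w\<close>, and
  \<open>T(s) = \<integral>\<^sub>s\<^sup>\<infinity> exp(-G y) w(y) / y dy\<close>. Then \<open>\<xi> = -s exp(G) T\<close> solves the linear ODE
  \<open>\<xi>' = \<xi>/s + 2\<eta>w\<xi> + w\<close>. Hypothesis (I2) says \<open>w(s) \<le> \<alpha>\<kappa>s\<^sup>-\<^sup>\<alpha>\<close>; as \<open>G\<close> is
  nondecreasing, \<open>exp(G s) T(s) \<le> \<integral>\<^sub>s\<^sup>\<infinity> \<alpha>\<kappa>y\<^sup>-\<^sup>1\<^sup>-\<^sup>\<alpha> dy = \<kappa>s\<^sup>-\<^sup>\<alpha>\<close>, which bounds \<open>\<xi>\<close>.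
  The bound on \<open>\<xi>'\<close> is read off the ODE. Differentiating the ODE once more and using
  \<open>w' = -(2 + r) w / s\<close> with \<open>r = s f''' / f''\<close> gives
  \<open>\<xi>'' f'' s\<^sup>2 = 2\<eta>\<xi>' - (1 + r)(2\<eta>\<xi> + 1)/s\<close>, and (I3) says \<open>|r| \<le> \<kappa>\<close>.
\<close>

lemma set_integral_eq_integral_if_dominated:
  fixes h \<psi> :: "real \<Rightarrow> real"
  assumes S: "S \<in> sets borel" and cont: "continuous_on S h" and dom: "\<psi> integrable_on S"
    and bounds: "\<And>x. x \<in> S \<Longrightarrow> 0 \<le> h x \<and> h x \<le> \<psi> x"
  shows "h integrable_on S" "(LBINT x:S. h x) = integral S h"
proof -
  have S': "S \<in> sets lebesgue"
    using S by simp
  show "h integrable_on S"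
    by (rule measurable_bounded_by_integrable_imp_integrable_real[OF
          continuous_imp_measurable_on_sets_lebesgue[OF cont S'] dom _ S'])
       (use bounds in force)
  then have "h absolutely_integrable_on S"
    using nonnegative_absolutely_integrable_1 bounds by blast
  moreover have "(\<lambda>x. indicator S x *\<^sub>R h x) \<in> borel_measurable lborel"
    using borel_measurable_continuous_on_indicator[OF S cont] by simp
  ultimately have "set_integrable lborel S h"
    unfolding set_integrable_def using integrable_completion by blast
  then show "(LBINT x:S. h x) = integral S h"
    by (rule set_borel_integral_eq_integral(2))
qed

lemma set_integral_Ioc_eq_integral_Icc:
  fixes h :: "real \<Rightarrow> real"
  assumes cont: "continuous_on {0<..} h"
    and bounds: "\<And>y. 0 < y \<Longrightarrow> 0 \<le> h y \<and> h y \<le> C * y powr -\<alpha>"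
    and "\<alpha> < 1" and "0 < u"
  shows "h integrable_on {0..u}" "(LBINT y:{0<..u}. h y) = integral {0..u} h"
proof -
  have "(\<lambda>y. C * y powr -\<alpha>) integrable_on {0<..u}"
    using integrable_on_cmult_left[OF integrable_on_powr_from_0'[of "-\<alpha>" u]] assms by simp
  moreover have "continuous_on {0<..u} h"
    using cont by (rule continuous_on_subset) auto
  ultimately have "h integrable_on {0<..u}" "(LBINT y:{0<..u}. h y) = integral {0<..u} h"
    using set_integral_eq_integral_if_dominated[of "{0<..u}" h] bounds by auto
  moreover have "negligible {x \<in> {0<..u} - {0..u}. h x \<noteq> 0}"
    "negligible {x \<in> {0..u} - {0<..u}. h x \<noteq> 0}"
    by (auto intro: negligible_subset[of "{0::real}"])
  ultimately show "h integrable_on {0..u}" "(LBINT y:{0<..u}. h y) = integral {0..u} h"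
    by (simp_all add: integrable_spike_set integral_spike_set)
qed

lemma set_integral_Ioi_eq_integral_Ici:
  fixes k :: "real \<Rightarrow> real"
  assumes cont: "continuous_on {0<..} k"
    and bounds: "\<And>y. 0 < y \<Longrightarrow> 0 \<le> k y \<and> k y \<le> C * y powr (-1-\<alpha>)"
    and "0 < \<alpha>" and "0 < u"
  shows "k integrable_on {u..}" "(LBINT y:{u<..}. k y) = integral {u..} k"
proof -
  have spike: "negligible {x \<in> {u<..} - {u..}. \<phi> x \<noteq> 0}"
    "negligible {x \<in> {u..} - {u<..}. \<phi> x \<noteq> 0}" for \<phi> :: "real \<Rightarrow> real"
    by (auto intro: negligible_subset[of "{u}"])
  have "(\<lambda>y. C * y powr (-1-\<alpha>)) integrable_on {u..}"
    using integrable_on_cmult_left[OF has_integral_integrable[OF has_integral_powr_to_inf[of "-1-\<alpha>" u]]] assms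
    by simp
  then have "(\<lambda>y. C * y powr (-1-\<alpha>)) integrable_on {u<..}"
    by (rule integrable_spike_set) (fact spike)+
  moreover have "continuous_on {u<..} k"
    using cont by (rule continuous_on_subset) (use \<open>0 < u\<close> in auto)
  ultimately have int: "k integrable_on {u<..}" and eq: "(LBINT y:{u<..}. k y) = integral {u<..} k"
    using set_integral_eq_integral_if_dominated[of "{u<..}" k] bounds \<open>0 < u\<close> by auto
  from int show "k integrable_on {u..}"
    by (rule integrable_spike_set) (fact spike)+
  have "integral {u<..} k = integral {u..} k"
    by (rule integral_spike_set) (fact spike)+
  with eq show "(LBINT y:{u<..}. k y) = integral {u..} k"
    by simp
qed

lemma powr_one_minus: "0 < s \<Longrightarrow> s powr (1 - a) = s * s powr - a"
  for s a :: real
  using powr_add[of s 1 "- a"] by simp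

lemma has_real_derivative_set_integral_Ioc:
  fixes h :: "real \<Rightarrow> real"
  assumes cont: "continuous_on {0<..} h"
    and bounds: "\<And>y. 0 < y \<Longrightarrow> 0 \<le> h y \<and> h y \<le> C * y powr -\<alpha>"
    and "\<alpha> < 1" and "0 < t"
  shows "((\<lambda>u. LBINT y:{0<..u}. h y) has_real_derivative h t) (at t)"
proof -
  have int: "h integrable_on {0..u}" "(LBINT y:{0<..u}. h y) = integral {0..u} h" if "0 < u" for u
    using set_integral_Ioc_eq_integral_Icc[where C=C and \<alpha>=\<alpha>, OF cont bounds \<open>\<alpha> < 1\<close> that]
    by auto
  define a where "a = t / 2"
  have a: "0 < a" "a < t"
    using \<open>0 < t\<close> by (auto simp: a_def)
  have "((\<lambda>u. integral {a..u} h) has_real_derivative h t) (at t within {a..2*t})"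
    by (rule integral_has_real_derivative) (use a in \<open>auto intro: continuous_on_subset[OF cont]\<close>)
  then have "((\<lambda>u. integral {0..a} h + integral {a..u} h) has_real_derivative h t) (at t)"
    using a by (auto simp: at_within_Icc_at intro!: derivative_eq_intros)
  moreover have "integral {0..a} h + integral {a..u} h = (LBINT y:{0<..u}. h y)" if "a < u" for u
    using int[of u] Henstock_Kurzweil_Integration.integral_combine[of 0 a u h] a that by auto
  ultimately show ?thesis
    using has_field_derivative_transform_within_open[where S="{a<..}"] a by auto
qed

lemma has_real_derivative_set_integral_Ioi:
  fixes k :: "real \<Rightarrow> real"
  assumes cont: "continuous_on {0<..} k"
    and bounds: "\<And>y. 0 < y \<Longrightarrow> 0 \<le> k y \<and> k y \<le> C * y powr (-1-\<alpha>)"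
    and "0 < \<alpha>" and "0 < t"
  shows "((\<lambda>u. LBINT y:{u<..}. k y) has_real_derivative - k t) (at t)"
proof -
  have int: "k integrable_on {v..}" "(LBINT y:{v<..}. k y) = integral {v..} k" if "0 < v" for v
    using set_integral_Ioi_eq_integral_Ici[where C=C and \<alpha>=\<alpha>, OF cont bounds \<open>0 < \<alpha>\<close> that]
    by auto
  define b where "b = 2 * t"
  have b: "t < b"
    using \<open>0 < t\<close> by (auto simp: b_def)
  have "((\<lambda>u. integral {u..b} k) has_real_derivative - k t) (at t within {t/2..b})"
    by (rule integral_has_real_derivative') (use b \<open>0 < t\<close> in \<open>auto intro: continuous_on_subset[OF cont]\<close>)
  then have "((\<lambda>u. integral {u..b} k + integral {b..} k) has_real_derivative - k t) (at t)"
    using b \<open>0 < t\<close> by (auto simp: at_within_Icc_at intro!: derivative_eq_intros)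
  moreover have "integral {u..b} k + integral {b..} k = (LBINT y:{u<..}. k y)" if "0 < u" "u < b" for u
  proof -
    have "(k has_integral integral {u..b} k + integral {b..} k) ({u..b} \<union> {b..})"
      using int(1)[of u] int(1)[of b] that b
      by (intro has_integral_Un integrable_integral)
         (auto intro: integrable_on_subinterval negligible_subset[of "{b}"])
    moreover have "{u..b} \<union> {b..} = {u..}"
      using that by auto
    ultimately show ?thesis
      using int(2)[of u] that by (simp add: integral_unique)
  qed
  ultimately show ?thesis
    using has_field_derivative_transform_within_open[where S="{0<..<b}"] b \<open>0 < t\<close> by auto
qed

locale xi_setting =
  fixes f :: "real \<Rightarrow> real" and \<alpha> \<kappa> \<eta> :: real
  assumes alpha: "0 < \<alpha>" "\<alpha> < 1" and kappa: "0 < \<kappa>" and eta: "0 \<le> \<eta>"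
    and continuous_f'': "continuous_on {0<..} (deriv (deriv f))"
    and f''_pos: "\<And>s. 0 < s \<Longrightarrow> 0 < deriv (deriv f) s"
    and f''_lower: "\<And>s. 0 < s \<Longrightarrow> s powr \<alpha> / (\<alpha> * \<kappa>) \<le> s\<^sup>2 * deriv (deriv f) s"
begin

definition weight :: "real \<Rightarrow> real" where
  "weight y = 1 / (y\<^sup>2 * deriv (deriv f) y)"

lemma weight_pos: "0 < y \<Longrightarrow> 0 < weight y"
  using f''_pos by (simp add: weight_def)

lemma weight_le:
  assumes "0 < y"
  shows "weight y \<le> \<alpha> * \<kappa> * y powr -\<alpha>"
proof -
  have "0 < y\<^sup>2 * deriv (deriv f) y * (y powr \<alpha> / (\<alpha> * \<kappa>))"
    using alpha kappa f''_pos[OF assms] assms by simp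
  then have "weight y \<le> 1 / (y powr \<alpha> / (\<alpha> * \<kappa>))"
    unfolding weight_def by (intro divide_left_mono f''_lower assms) auto
  then show ?thesis
    by (simp add: powr_minus divide_simps)
qed

lemma continuous_on_weight: "continuous_on {0<..} weight"
  unfolding weight_def[abs_def]
  by (intro continuous_intros continuous_f'') (auto simp: f''_pos[THEN less_imp_neq, THEN not_sym])

lemma Gfun_has_real_derivative:
  assumes "0 < t"
  shows "(Gfun f \<eta> has_real_derivative 2 * \<eta> * weight t) (at t)"
proof -
  have "((\<lambda>u. LBINT y:{0<..u}. 2 * \<eta> * weight y) has_real_derivative 2 * \<eta> * weight t) (at t)"
  proof (rule has_real_derivative_set_integral_Ioc)
    show "continuous_on {0<..} (\<lambda>y. 2 * \<eta> * weight y)"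
      by (intro continuous_intros continuous_on_weight)
    show "0 \<le> 2 * \<eta> * weight y \<and> 2 * \<eta> * weight y \<le> 2 * \<eta> * \<alpha> * \<kappa> * y powr -\<alpha>" if "0 < y" for y
      using weight_pos[OF that] weight_le[OF that] eta by (simp add: mult_left_mono mult.assoc)
  qed (use alpha assms in auto)
  then show ?thesis
    by (simp add: Gfun_def[abs_def] weight_def)
qed

lemma continuous_on_Gfun: "continuous_on {0<..} (Gfun f \<eta>)"
  using Gfun_has_real_derivative
  by (intro continuous_at_imp_continuous_on) (auto intro: DERIV_isCont)

lemma Gfun_mono:
  assumes "0 < x" "x \<le> y"
  shows "Gfun f \<eta> x \<le> Gfun f \<eta> y"
proof (rule DERIV_nonneg_imp_nondecreasing[OF \<open>x \<le> y\<close>])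
  fix z assume "x \<le> z" "z \<le> y"
  with assms have "0 < z" by simp
  then show "\<exists>d. (Gfun f \<eta> has_real_derivative d) (at z) \<and> 0 \<le> d"
    using Gfun_has_real_derivative weight_pos eta by force
qed

lemma Gfun_nonneg: "0 \<le> Gfun f \<eta> s"
  unfolding Gfun_def set_lebesgue_integral_def
  using eta by (intro Bochner_Integration.integral_nonneg)
    (auto simp: indicator_def intro!: divide_nonneg_pos mult_pos_pos f''_pos)

definition tail :: "real \<Rightarrow> real" where
  "tail t = (LBINT y:{t<..}. exp (- Gfun f \<eta> y) * weight y / y)"

lemma xi_eq_tail: "xi f \<eta> t = - t * exp (Gfun f \<eta> t) * tail t"
  by (simp add: xi_def tail_def weight_def power2_eq_square power3_eq_cube mult_ac)

lemma tail_integrand_bounds: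
  assumes "0 < y"
  shows "0 \<le> exp (- Gfun f \<eta> y) * weight y / y"
    and "exp (- Gfun f \<eta> y) * weight y / y \<le> exp (- Gfun f \<eta> y) * (\<alpha> * \<kappa> * y powr (-1-\<alpha>))"
proof -
  show "0 \<le> exp (- Gfun f \<eta> y) * weight y / y"
    using weight_pos[OF assms] assms by simp
  have "weight y / y \<le> \<alpha> * \<kappa> * y powr -\<alpha> / y"
    using weight_le[OF assms] assms by (simp add: divide_right_mono)
  also have "\<dots> = \<alpha> * \<kappa> * y powr (-1-\<alpha>)"
    using assms by (simp add: powr_diff powr_minus divide_simps)
  finally show "exp (- Gfun f \<eta> y) * weight y / y \<le> exp (- Gfun f \<eta> y) * (\<alpha> * \<kappa> * y powr (-1-\<alpha>))"
    by (simp add: mult_left_mono flip: times_divide_eq_right)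
qed

lemma tail_has_real_derivative_and_integral:
  assumes "0 < t"
  shows "(tail has_real_derivative - (exp (- Gfun f \<eta> t) * weight t / t)) (at t)"
    and "((\<lambda>y. exp (- Gfun f \<eta> y) * weight y / y) has_integral tail t) {t..}"
proof -
  let ?k = "\<lambda>y. exp (- Gfun f \<eta> y) * weight y / y"
  have cont: "continuous_on {0<..} ?k"
    by (intro continuous_intros continuous_on_Gfun continuous_on_weight) auto
  have bounds: "0 \<le> ?k y \<and> ?k y \<le> \<alpha> * \<kappa> * y powr (-1-\<alpha>)" if "0 < y" for y
  proof -
    have "exp (- Gfun f \<eta> y) * (\<alpha> * \<kappa> * y powr (-1-\<alpha>)) \<le> \<alpha> * \<kappa> * y powr (-1-\<alpha>)"
      by (rule mult_left_le_one_le) (use Gfun_nonneg alpha kappa in auto)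
    then show ?thesis
      using tail_integrand_bounds[OF that] by linarith
  qed
  show "(tail has_real_derivative - ?k t) (at t)"
    unfolding tail_def[abs_def] using cont bounds alpha(1) assms
    by (rule has_real_derivative_set_integral_Ioi)
  show "(?k has_integral tail t) {t..}"
    unfolding tail_def using set_integral_Ioi_eq_integral_Ici[OF cont bounds alpha(1) assms]
    by (simp add: integrable_integral)
qed

lemma xi_has_real_derivative:
  assumes "0 < t"
  shows "(xi f \<eta> has_real_derivative xi f \<eta> t / t + 2 * \<eta> * weight t * xi f \<eta> t + weight t) (at t)"
proof -
  let ?G = "Gfun f \<eta> t"
  have derivative: "((\<lambda>t. - t * exp (Gfun f \<eta> t) * tail t) has_real_derivative
      - exp ?G * tail t - t * (exp ?G * (2 * \<eta> * weight t)) * tail t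
      + (- t * exp ?G) * - (exp (- ?G) * weight t / t)) (at t)"
    using Gfun_has_real_derivative[OF assms] tail_has_real_derivative_and_integral(1)[OF assms]
    by (auto intro!: derivative_eq_intros simp: algebra_simps)
  have "- exp ?G * tail t - t * (exp ?G * (2 * \<eta> * weight t)) * tail t
      + (- t * exp ?G) * - (exp (- ?G) * weight t / t)
      = xi f \<eta> t / t + 2 * \<eta> * weight t * xi f \<eta> t + weight t"
    using assms by (simp add: xi_eq_tail field_simps exp_minus)
  with derivative show ?thesis
    by (simp only: xi_eq_tail[abs_def])
qed

lemma deriv_xi:
  "0 < t \<Longrightarrow> deriv (xi f \<eta>) t = xi f \<eta> t / t + 2 * \<eta> * weight t * xi f \<eta> t + weight t"
  using xi_has_real_derivative by (rule DERIV_imp_deriv)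

lemma abs_xi_le:
  assumes "0 < s"
  shows "\<bar>xi f \<eta> s\<bar> \<le> \<kappa> * s powr (1 - \<alpha>)"
proof -
  let ?k = "\<lambda>y. exp (- Gfun f \<eta> y) * weight y / y"
  note tail_integral = tail_has_real_derivative_and_integral(2)[OF assms]
  have "((\<lambda>y. \<alpha> * \<kappa> * y powr (-1-\<alpha>)) has_integral
      \<alpha> * \<kappa> * (- (s powr (-1-\<alpha>+1)) / (-1-\<alpha>+1))) {s..}"
    by (rule has_integral_mult_right[OF has_integral_powr_to_inf]) (use alpha assms in auto)
  moreover have "\<alpha> * \<kappa> * (- (s powr (-1-\<alpha>+1)) / (-1-\<alpha>+1)) = \<kappa> * s powr -\<alpha>"
    using alpha by simp
  ultimately have majorant: "((\<lambda>y. \<alpha> * \<kappa> * y powr (-1-\<alpha>)) has_integral \<kappa> * s powr -\<alpha>) {s..}"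
    by simp
  have "exp (Gfun f \<eta> s) * tail s \<le> \<kappa> * s powr -\<alpha>"
  proof (rule has_integral_le[OF has_integral_mult_right[OF tail_integral] majorant])
    fix y :: real
    assume "y \<in> {s..}"
    then have y: "0 < y" "s \<le> y"
      using assms by auto
    have "exp (Gfun f \<eta> s) * ?k y \<le> exp (Gfun f \<eta> s) * (exp (- Gfun f \<eta> y) * (\<alpha> * \<kappa> * y powr (-1-\<alpha>)))"
      using tail_integrand_bounds(2)[OF y(1)] by (rule mult_left_mono) simp
    also have "\<dots> = exp (Gfun f \<eta> s - Gfun f \<eta> y) * (\<alpha> * \<kappa> * y powr (-1-\<alpha>))"
      by (simp add: exp_diff exp_minus field_simps)
    also have "\<dots> \<le> \<alpha> * \<kappa> * y powr (-1-\<alpha>)"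
      using Gfun_mono[OF assms y(2)] alpha kappa by (intro mult_left_le_one_le) auto
    finally show "exp (Gfun f \<eta> s) * ?k y \<le> \<alpha> * \<kappa> * y powr (-1-\<alpha>)" .
  qed
  moreover have "0 \<le> tail s"
    by (rule has_integral_nonneg[OF tail_integral], rule tail_integrand_bounds(1)) (use assms in auto)
  ultimately have "\<bar>xi f \<eta> s\<bar> \<le> s * (\<kappa> * s powr -\<alpha>)"
    using assms by (simp add: xi_eq_tail abs_mult mult_left_mono)
  also have "\<dots> = \<kappa> * s powr (1 - \<alpha>)"
    by (simp add: powr_one_minus[OF assms])
  finally show ?thesis .
qed

lemma abs_deriv_xi_le:
  assumes "0 < s"
  shows "\<bar>deriv (xi f \<eta>) s\<bar> \<le> (1 + \<alpha>) * \<kappa> * s powr (- \<alpha>) + 2 * \<eta> * \<alpha> * \<kappa>\<^sup>2 * s powr (1 - 2 * \<alpha>)"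
proof -
  note powr_1 = powr_one_minus[OF assms, of \<alpha>]
  have powr_2: "s powr (1 - 2 * \<alpha>) = s * s powr -\<alpha> * s powr -\<alpha>"
    using powr_add[of s "1 - \<alpha>" "-\<alpha>"] by (simp add: powr_1)
  have "\<bar>xi f \<eta> s / s\<bar> \<le> \<kappa> * s powr -\<alpha>"
    using abs_xi_le[OF assms] assms by (simp add: abs_divide divide_simps powr_1 mult_ac)
  moreover have "\<bar>2 * \<eta> * weight s * xi f \<eta> s\<bar> \<le> 2 * \<eta> * (\<alpha> * \<kappa> * s powr -\<alpha>) * (\<kappa> * s powr (1 - \<alpha>))"
    using abs_xi_le[OF assms] weight_le[OF assms] weight_pos[OF assms] eta
    by (simp add: abs_mult mult_mono mult_left_mono)
  moreover have "\<bar>weight s\<bar> \<le> \<alpha> * \<kappa> * s powr -\<alpha>"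
    using weight_le[OF assms] weight_pos[OF assms] by simp
  ultimately have "\<bar>deriv (xi f \<eta>) s\<bar> \<le> \<kappa> * s powr -\<alpha>
      + 2 * \<eta> * (\<alpha> * \<kappa> * s powr -\<alpha>) * (\<kappa> * s powr (1 - \<alpha>)) + \<alpha> * \<kappa> * s powr -\<alpha>"
    unfolding deriv_xi[OF assms] by linarith
  also have "\<dots> = (1 + \<alpha>) * \<kappa> * s powr (- \<alpha>) + 2 * \<eta> * \<alpha> * \<kappa>\<^sup>2 * s powr (1 - 2 * \<alpha>)"
    unfolding powr_1 powr_2 by (simp add: algebra_simps power2_eq_square)
  finally show ?thesis .
qed

end

locale xi_setting_C3 = xi_setting +
  fixes f''' :: "real \<Rightarrow> real"
  assumes f''_has_derivative: "\<And>s. 0 < s \<Longrightarrow> (deriv (deriv f) has_real_derivative f''' s) (at s)"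
    and f'''_ratio: "\<And>s. 0 < s \<Longrightarrow> \<bar>s * f''' s / deriv (deriv f) s\<bar> \<le> \<kappa>"
begin

lemma weight_has_real_derivative:
  assumes "0 < t"
  shows "(weight has_real_derivative - (2 + t * f''' t / deriv (deriv f) t) * weight t / t) (at t)"
  unfolding weight_def[abs_def] using f''_has_derivative[OF assms] f''_pos[OF assms] assms
  by (auto intro!: derivative_eq_intros simp: power2_eq_square field_simps)

lemma deriv_xi_has_real_derivative:
  assumes "0 < t"
  shows "(deriv (xi f \<eta>) has_real_derivative
      (2 * \<eta> * deriv (xi f \<eta>) t
        - (1 + t * f''' t / deriv (deriv f) t) * (2 * \<eta> * xi f \<eta> t + 1) / t) * weight t) (at t)"
proof -
  let ?r = "t * f''' t / deriv (deriv f) t"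
  have "((\<lambda>t. xi f \<eta> t / t + 2 * \<eta> * weight t * xi f \<eta> t + weight t) has_real_derivative
      (deriv (xi f \<eta>) t * t - xi f \<eta> t) / t\<^sup>2
      + 2 * \<eta> * (- (2 + ?r) * weight t / t * xi f \<eta> t + weight t * deriv (xi f \<eta>) t)
      - (2 + ?r) * weight t / t) (at t)"
    using xi_has_real_derivative[OF assms] weight_has_real_derivative[OF assms] assms
    by (auto intro!: derivative_eq_intros simp: deriv_xi power2_eq_square field_simps)
  also have "(deriv (xi f \<eta>) t * t - xi f \<eta> t) / t\<^sup>2
      + 2 * \<eta> * (- (2 + ?r) * weight t / t * xi f \<eta> t + weight t * deriv (xi f \<eta>) t)
      - (2 + ?r) * weight t / t
      = (2 * \<eta> * deriv (xi f \<eta>) t - (1 + ?r) * (2 * \<eta> * xi f \<eta> t + 1) / t) * weight t"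
    using assms by (simp add: deriv_xi power2_eq_square field_simps)
  finally show ?thesis
    by (rule has_field_derivative_transform_within_open[where S="{0<..}"]) (use assms deriv_xi in auto)
qed

lemma deriv2_xi_mult_eq:
  assumes "0 < s"
  shows "deriv (deriv (xi f \<eta>)) s * deriv (deriv f) s * s\<^sup>2
    = 2 * \<eta> * deriv (xi f \<eta>) s
      - (1 + s * f''' s / deriv (deriv f) s) * (2 * \<eta> * xi f \<eta> s + 1) / s"
  using DERIV_imp_deriv[OF deriv_xi_has_real_derivative[OF assms]] f''_pos[OF assms] assms
  by (simp add: weight_def)

lemma abs_deriv2_xi_le:
  assumes "0 < s"
  shows "\<bar>deriv (deriv (xi f \<eta>)) s * deriv (deriv f) s * s\<^sup>2\<bar>
    \<le> (\<kappa> + 1) * s powr (- 1) + 2 * \<eta> * \<kappa> * (2 + \<alpha> + \<kappa>) * s powr (- \<alpha>)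
      + 4 * \<alpha> * \<eta>\<^sup>2 * \<kappa>\<^sup>2 * s powr (1 - 2 * \<alpha>)"
proof -
  let ?r = "s * f''' s / deriv (deriv f) s"
  have "\<bar>(1 + ?r) * (2 * \<eta> * xi f \<eta> s + 1) / s\<bar> \<le> (1 + \<kappa>) * (2 * \<eta> * (\<kappa> * s powr (1 - \<alpha>)) + 1) / s"
    using f'''_ratio[OF assms] abs_xi_le[OF assms] eta kappa assms
    by (auto simp: abs_mult abs_divide intro!: divide_right_mono mult_mono abs_triangle_ineq[THEN order_trans])
  moreover have "\<bar>2 * \<eta> * deriv (xi f \<eta>) s\<bar>
      \<le> 2 * \<eta> * ((1 + \<alpha>) * \<kappa> * s powr (- \<alpha>) + 2 * \<eta> * \<alpha> * \<kappa>\<^sup>2 * s powr (1 - 2 * \<alpha>))"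
    using abs_deriv_xi_le[OF assms] eta by (simp add: abs_mult mult_left_mono)
  ultimately have "\<bar>deriv (deriv (xi f \<eta>)) s * deriv (deriv f) s * s\<^sup>2\<bar>
      \<le> 2 * \<eta> * ((1 + \<alpha>) * \<kappa> * s powr (- \<alpha>) + 2 * \<eta> * \<alpha> * \<kappa>\<^sup>2 * s powr (1 - 2 * \<alpha>))
        + (1 + \<kappa>) * (2 * \<eta> * (\<kappa> * s powr (1 - \<alpha>)) + 1) / s"
    unfolding deriv2_xi_mult_eq[OF assms] by linarith
  also have "\<dots> = (\<kappa> + 1) * s powr (- 1) + 2 * \<eta> * \<kappa> * (2 + \<alpha> + \<kappa>) * s powr (- \<alpha>)
      + 4 * \<alpha> * \<eta>\<^sup>2 * \<kappa>\<^sup>2 * s powr (1 - 2 * \<alpha>)"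
    using assms unfolding powr_one_minus[OF assms] by (simp add: powr_minus_divide field_simps power2_eq_square)
  finally show ?thesis .
qed

end

lemma hypothesis2_imp_xi_setting_C3:
  assumes "hypothesis2 f \<beta> \<alpha> \<kappa> L K" and "0 \<le> \<eta>"
  shows "xi_setting_C3 f \<alpha> \<kappa> \<eta> (deriv (deriv (deriv f)))"
proof -
  note H = assms(1)[unfolded hypothesis2_def C4beta_loc_def]
  have "(deriv ^^ 2) f differentiable (at s)" if "0 < s" for s
    using H that by auto
  then have f''_deriv: "(deriv (deriv f) has_real_derivative deriv (deriv (deriv f)) s) (at s)"
    if "0 < s" for s
    using that by (simp add: DERIV_deriv_iff_real_differentiable numeral_2_eq_2)
  have "continuous_on {0<..} (deriv (deriv f))"
    using f''_deriv by (intro continuous_at_imp_continuous_on) (auto intro: DERIV_isCont)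
  with H f''_deriv \<open>0 \<le> \<eta>\<close> show ?thesis
    by unfold_locales auto
qed

theorem corollary3p1:
  fixes f :: "real \<Rightarrow> real" and \<beta> \<alpha> \<kappa> L K \<eta> s :: real
  assumes "hypothesis2 f \<beta> \<alpha> \<kappa> L K"
    and "0 < \<eta>" and "\<eta> \<le> 1"
    and "0 < s"
  shows "xi f \<eta> differentiable (at s) \<and> deriv (xi f \<eta>) differentiable (at s) \<and>
    \<bar>xi f \<eta> s\<bar> \<le> \<kappa> * s powr (1 - \<alpha>) \<and>
    \<bar>deriv (xi f \<eta>) s\<bar> \<le> (1 + \<alpha>) * \<kappa> * s powr (- \<alpha>)
        + 2 * \<eta> * \<alpha> * \<kappa>\<^sup>2 * s powr (1 - 2 * \<alpha>) \<and>
    \<bar>deriv (deriv (xi f \<eta>)) s * deriv (deriv f) s * s\<^sup>2\<bar>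
      \<le> (\<kappa> + 1) * s powr (- 1) + 2 * \<eta> * \<kappa> * (2 + \<alpha> + \<kappa>) * s powr (- \<alpha>)
        + 4 * \<alpha> * \<eta>\<^sup>2 * \<kappa>\<^sup>2 * s powr (1 - 2 * \<alpha>)"
proof -
  interpret xi_setting_C3 f \<alpha> \<kappa> \<eta> "deriv (deriv (deriv f))"
    using hypothesis2_imp_xi_setting_C3 assms(1,2) by force
  show ?thesis
    using xi_has_real_derivative[OF assms(4)] deriv_xi_has_real_derivative[OF assms(4)]
      abs_xi_le[OF assms(4)] abs_deriv_xi_le[OF assms(4)] abs_deriv2_xi_le[OF assms(4)]
    by (auto simp: real_differentiable_def)
qed

end
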